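(* Let $0\le\sigma<1$ and $f\colon[0,1]\to\mathbb R$, and put $f_\sigma(x)=f(x)/x^\sigma$. Assume that the Riemann sums $R_{f_\sigma}(\ell)=\frac1\ell\sum_{k=1}^\ell f_\sigma(k/\ell)$ converge to a finite limit $I(f_\sigma)$ as $\ell\to\infty$. Then $$\lim_{n\to\infty}\frac{S_{n,\sigma}(f)}{\sum_{1\le\ell\le n}\ell^{1-2\sigma}}=I(f_\sigma).$$
   Context: $S_{n,\sigma}(f)=\sum_{1\le k\le\ell\le n}\frac{1}{(k\ell)^\sigma}f\big(\frac k\ell\big)$ (quadratic Riemann sum). *)

theory Defs
  imports "HOL-Analysis.Analysis"
begin

definition quad_riemann_sum :: "(real \<Rightarrow> real) \<Rightarrow> real \<Rightarrow> nat \<Rightarrow> real" where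
  "quad_riemann_sum f \<sigma> n =
     (\<Sum>l = 1..n. \<Sum>k = 1..l. f (real k / real l) / (real k * real l) powr \<sigma>)"

definition riemann_sum :: "(real \<Rightarrow> real) \<Rightarrow> nat \<Rightarrow> real" where
  "riemann_sum g l = (1 / real l) * (\<Sum>k = 1..l. g (real k / real l))"

end

theory Submission
  imports Defs
begin

text \<open>Since (k l)^\<sigma> = (k/l)^\<sigma> l^(2\<sigma>), the inner sum over k of S_{n,\<sigma>}(f) is
  l^(1-2\<sigma>) R_{f_\<sigma>}(l). So the quotient is a weighted mean of the Riemann sums R_{f_\<sigma>}(l)
  with weights l^(1-2\<sigma>), whose partial sums diverge because 1 - 2\<sigma> \<ge> -1 (they dominate the
  harmonic series). By Toeplitz's argument, such weighted means of a convergent sequence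
  converge to its limit.\<close>

lemma sum_weighted_deviation_le:
  fixes a R :: "nat \<Rightarrow> real"
  assumes nonneg: "\<And>l. 0 \<le> a l"
    and close: "\<And>l. N < l \<Longrightarrow> \<bar>R l - I\<bar> \<le> e"
    and "N \<le> n"
  shows "\<bar>\<Sum>l = 1..n. a l * (R l - I)\<bar>
           \<le> (\<Sum>l = 1..N. a l * \<bar>R l - I\<bar>) + e * (\<Sum>l = 1..n. a l)"
proof -
  have e_nonneg: "0 \<le> e"
    using close[of "Suc N"] by simp
  have split: "{1..n} = {1..N} \<union> {N<..n}"
    using \<open>N \<le> n\<close> by auto
  have "\<bar>\<Sum>l = 1..n. a l * (R l - I)\<bar> \<le> (\<Sum>l = 1..n. a l * \<bar>R l - I\<bar>)"
    by (rule order_trans[OF sum_abs]) (simp add: abs_mult nonneg)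
  also have "\<dots> = (\<Sum>l = 1..N. a l * \<bar>R l - I\<bar>) + (\<Sum>l\<in>{N<..n}. a l * \<bar>R l - I\<bar>)"
    unfolding split by (rule sum.union_disjoint) auto
  also have "(\<Sum>l\<in>{N<..n}. a l * \<bar>R l - I\<bar>) \<le> (\<Sum>l\<in>{N<..n}. a l * e)"
    by (intro sum_mono mult_left_mono close nonneg) auto
  also have "\<dots> \<le> (\<Sum>l = 1..n. a l * e)"
    using nonneg e_nonneg by (intro sum_mono2) auto
  also have "\<dots> = e * (\<Sum>l = 1..n. a l)"
    by (simp add: sum_distrib_left mult.commute[of _ e])
  finally show ?thesis
    by simp
qed

lemma weighted_mean_tendsto:
  fixes a R :: "nat \<Rightarrow> real"
  assumes nonneg: "\<And>l. 0 \<le> a l"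
    and divergent: "filterlim (\<lambda>n. \<Sum>l = 1..n. a l) at_top sequentially"
    and lim: "R \<longlonglongrightarrow> I"
  shows "(\<lambda>n. (\<Sum>l = 1..n. a l * R l) / (\<Sum>l = 1..n. a l)) \<longlonglongrightarrow> I"
proof (rule LIMSEQ_I)
  fix e :: real
  assume "0 < e"
  define A where "A n = (\<Sum>l = 1..n. a l)" for n
  obtain N where N: "\<And>l. N \<le> l \<Longrightarrow> \<bar>R l - I\<bar> < e / 2"
    using LIMSEQ_D[OF lim, of "e / 2"] \<open>0 < e\<close> by (auto simp: real_norm_def)
  have close: "\<bar>R l - I\<bar> \<le> e / 2" if "N < l" for l
    using N[of l] that by simp
  \<comment> \<open>the first N terms contribute at most C, which is eventually negligible against A n\<close>
  define C where "C = (\<Sum>l = 1..N. a l * \<bar>R l - I\<bar>)"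
  have "C \<ge> 0"
    unfolding C_def using nonneg by (intro sum_nonneg) simp
  have "eventually (\<lambda>n. 2 * C / e + 1 \<le> A n) sequentially"
    using divergent unfolding A_def filterlim_at_top by simp
  then obtain M where M: "\<And>n. M \<le> n \<Longrightarrow> 2 * C / e + 1 \<le> A n"
    unfolding eventually_sequentially by blast
  have "\<bar>(\<Sum>l = 1..n. a l * R l) / A n - I\<bar> < e" if "max M N \<le> n" for n
  proof -
    have "2 * C / e < A n"
      using M[of n] that by simp
    moreover have "0 \<le> 2 * C / e"
      using \<open>0 < e\<close> \<open>C \<ge> 0\<close> by simp
    ultimately have A_pos: "0 < A n"
      by linarith
    have C_small: "C < e / 2 * A n"
      using \<open>2 * C / e < A n\<close> \<open>0 < e\<close> by (simp add: field_simps)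
    have "(\<Sum>l = 1..n. a l * R l) - A n * I = (\<Sum>l = 1..n. a l * (R l - I))"
      by (simp add: A_def right_diff_distrib sum_subtractf sum_distrib_right)
    moreover have "\<bar>\<Sum>l = 1..n. a l * (R l - I)\<bar> \<le> C + e / 2 * A n"
      unfolding C_def A_def using that by (intro sum_weighted_deviation_le nonneg close) auto
    ultimately have "\<bar>(\<Sum>l = 1..n. a l * R l) - A n * I\<bar> < e * A n"
      using C_small by linarith
    then have "\<bar>((\<Sum>l = 1..n. a l * R l) - A n * I) / A n\<bar> < e"
      by (simp only: abs_div_pos[OF A_pos, symmetric] pos_divide_less_eq[OF A_pos])
    moreover have "(\<Sum>l = 1..n. a l * R l) / A n - I = ((\<Sum>l = 1..n. a l * R l) - A n * I) / A n"
      using A_pos by (simp add: diff_divide_distrib)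
    ultimately show ?thesis
      by (simp only:)
  qed
  then show "\<exists>n0. \<forall>n\<ge>n0. norm ((\<Sum>l = 1..n. a l * R l) / (\<Sum>l = 1..n. a l) - I) < e"
    unfolding A_def real_norm_def by (intro exI[of _ "max M N"]) simp
qed

lemma sum_powr_at_top:
  fixes e :: real
  assumes "-1 \<le> e"
  shows "filterlim (\<lambda>n. \<Sum>l = 1..n. real l powr e) at_top sequentially"
proof (rule filterlim_at_top_mono[OF harm_at_top always_eventually], intro allI)
  fix n
  have "inverse (real l) \<le> real l powr e" if "l \<in> {1..n}" for l
  proof -
    have "inverse (real l) = real l powr -1"
      using that by (simp add: powr_minus)
    also have "\<dots> \<le> real l powr e"
      using that assms by (intro powr_mono) auto
    finally show ?thesis .
  qed
  then show "harm n \<le> (\<Sum>l = 1..n. real l powr e)"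
    unfolding harm_def by (intro sum_mono) auto
qed

lemma quad_riemann_inner_sum:
  fixes f :: "real \<Rightarrow> real" and \<sigma> :: real
  assumes "1 \<le> l"
  shows "(\<Sum>k = 1..l. f (real k / real l) / (real k * real l) powr \<sigma>)
           = real l powr (1 - 2 * \<sigma>) * riemann_sum (\<lambda>x. f x / x powr \<sigma>) l"
proof -
  have l_pos: "0 < real l"
    using assms by simp
  have "(real k * real l) powr \<sigma> = (real k / real l) powr \<sigma> * (real l powr \<sigma> * real l powr \<sigma>)" for k
    using l_pos by (simp add: powr_mult powr_divide)
  then have "(real k * real l) powr \<sigma> = (real k / real l) powr \<sigma> * real l powr (2 * \<sigma>)" for k
    by (simp only: mult_2 powr_add)
  then have "(\<Sum>k = 1..l. f (real k / real l) / (real k * real l) powr \<sigma>)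
      = (\<Sum>k = 1..l. f (real k / real l) / (real k / real l) powr \<sigma>) / real l powr (2 * \<sigma>)"
    by (simp only: divide_divide_eq_left sum_divide_distrib)
  also have "\<dots> = real l powr (1 - 2 * \<sigma>) * (1 / real l)
      * (\<Sum>k = 1..l. f (real k / real l) / (real k / real l) powr \<sigma>)"
    using l_pos by (simp add: powr_diff)
  finally show ?thesis
    unfolding riemann_sum_def by (simp only: mult.assoc)
qed

theorem theorem5p3:
  fixes f :: "real \<Rightarrow> real" and \<sigma> :: real and I :: real
  assumes "0 \<le> \<sigma>" and "\<sigma> < 1"
    and "(\<lambda>l. riemann_sum (\<lambda>x. f x / x powr \<sigma>) l) \<longlonglongrightarrow> I"
  shows "(\<lambda>n. quad_riemann_sum f \<sigma> n / (\<Sum>l = 1..n. real l powr (1 - 2 * \<sigma>))) \<longlonglongrightarrow> I"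
proof -
  have weighted_sum: "quad_riemann_sum f \<sigma> n
      = (\<Sum>l = 1..n. real l powr (1 - 2 * \<sigma>) * riemann_sum (\<lambda>x. f x / x powr \<sigma>) l)" for n
    unfolding quad_riemann_sum_def by (intro sum.cong refl quad_riemann_inner_sum) auto
  have divergent: "filterlim (\<lambda>n. \<Sum>l = 1..n. real l powr (1 - 2 * \<sigma>)) at_top sequentially"
    using \<open>\<sigma> < 1\<close> by (intro sum_powr_at_top) simp
  show ?thesis
    unfolding weighted_sum by (rule weighted_mean_tendsto[OF _ divergent assms(3)]) simp
qed

end
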